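(* Let $M$ be a complete pointed metric space and let $V=\{m_{xy}: x,y\in M,\ x\neq y\}\subset\mathcal F(M)$ be the set of molecules. Then the weak closure of $V$ in $\mathcal F(M)$ is contained in $V\cup\{0\}$.
   Context: A pointed metric space $M$ has a distinguished origin $0$. $\mathrm{Lip}_0(M)$ is the Banach space of real Lipschitz functions on $M$ vanishing at $0$ with the best Lipschitz constant as norm; $\delta(x)\in\mathrm{Lip}_0(M)^*$ is evaluation at $x$, and the Lipschitz free space $\mathcal F(M)$ is the closed linear span of $\delta(M)$ in $\mathrm{Lip}_0(M)^*$, with $\mathcal F(M)^*=\mathrm{Lip}_0(M)$. The molecule is $m_{xy}=(\delta(x)-\delta(y))/d(x,y)$ for $x\neq y$. *)

theory Defs
  imports "HOL-Analysis.Analysis"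
begin

text \<open>Elements of Lip_0(M)^* are represented as functionals on real functions on 'a;
  only their values on Lip0 z are meaningful, so equalities are stated on Lip0 z.\<close>

definition Lip0 :: "'a::metric_space \<Rightarrow> ('a \<Rightarrow> real) set" where
  "Lip0 z = {f. f z = 0 \<and> (\<exists>L. L-lipschitz_on UNIV f)}"

definition delta :: "'a \<Rightarrow> ('a \<Rightarrow> real) \<Rightarrow> real" where
  "delta x = (\<lambda>f. f x)"

definition molecule :: "'a::metric_space \<Rightarrow> 'a \<Rightarrow> ('a \<Rightarrow> real) \<Rightarrow> real" where
  "molecule x y = (\<lambda>f. (delta x f - delta y f) / dist x y)"

definition molecules :: "(('a::metric_space \<Rightarrow> real) \<Rightarrow> real) set" where
  "molecules = {molecule x y | x y. x \<noteq> y}"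

text \<open>The free space F(M): the norm closure (in the dual norm of Lip_0(M)^*) of the
  linear span of delta(M). A functional mu belongs to it iff for every eps > 0 there is a
  finite linear combination psi of deltas with |mu f - psi f| <= eps * L for every f in
  Lip0 z that is L-Lipschitz, i.e. the dual norm of mu - psi is at most eps.\<close>
definition free_space :: "'a::metric_space \<Rightarrow> (('a \<Rightarrow> real) \<Rightarrow> real) set" where
  "free_space z = {\<mu>. \<forall>\<epsilon>>0. \<exists>S c. finite S \<and>
     (\<forall>f\<in>Lip0 z. \<forall>L. L-lipschitz_on UNIV f \<longrightarrow>
        \<bar>\<mu> f - (\<Sum>x\<in>S. c x * delta x f)\<bar> \<le> \<epsilon> * L)}"

text \<open>Weak closure in F(M) of a set A: the weak topology sigma(F(M), F(M)^*) with
  F(M)^* = Lip_0(M); basic weak neighbourhoods of mu are given by finitely many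
  f in Lip_0(M) and eps > 0.\<close>
definition weak_closure :: "'a::metric_space \<Rightarrow> (('a \<Rightarrow> real) \<Rightarrow> real) set
    \<Rightarrow> (('a \<Rightarrow> real) \<Rightarrow> real) set" where
  "weak_closure z A = {\<mu> \<in> free_space z. \<forall>F \<epsilon>. finite F \<and> F \<subseteq> Lip0 z \<and> \<epsilon> > 0 \<longrightarrow>
     (\<exists>\<nu>\<in>A. \<forall>f\<in>F. \<bar>\<mu> f - \<nu> f\<bar> < \<epsilon>)}"

end

theory Submission
  imports Defs
begin

text \<open>If \<open>\<mu>\<close> is a weak limit of molecules \<open>m\<^sub>x\<^sub>y\<close> with \<open>(x, y)\<close> in a set of pairs \<open>P\<close>, and \<open>P\<close> is
  covered by finitely many pieces, then \<open>\<mu>\<close> is a weak limit of molecules from one of the pieces.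
  When \<open>\<mu> \<noteq> 0\<close>, approximate \<open>\<mu>\<close> in norm by a functional supported on a finite set \<open>T\<close>.
  Testing against a bounded function vanishing far from \<open>T\<close> on which \<open>\<mu>\<close> is large, and
  against \<open>min (d(\<cdot>, T)) r\<close> on which \<open>\<mu>\<close> is small, shows that molecules weakly close to \<open>\<mu>\<close>
  come from pairs near \<open>T \<times> T\<close>; so \<open>\<mu>\<close> is a weak limit of molecules from pairs in a single
  \<open>r\<close>-ball of \<open>M \<times> M\<close>. Shrinking \<open>r\<close> and using completeness produces a pair \<open>(a, b)\<close> such that
  \<open>\<mu>\<close> is a weak limit of molecules from every ball around \<open>(a, b)\<close>. If \<open>a \<noteq> b\<close>, continuity of
  \<open>(x, y) \<mapsto> m\<^sub>x\<^sub>y f\<close> at \<open>(a, b)\<close> gives \<open>\<mu> = m\<^sub>a\<^sub>b\<close>. If \<open>a = b\<close>, \<open>\<mu>\<close> kills every Lipschitz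
  function that is constant near \<open>a\<close>; these approximate each \<open>f \<in> Lip\<^sub>0(M)\<close> pointwise with a
  uniform Lipschitz bound, and on such sequences elements of the free space are continuous,
  so \<open>\<mu> = 0\<close>.\<close>

lemma lipschitz_on_max [lipschitz_intros]:
  fixes f g :: "'a::metric_space \<Rightarrow> real"
  assumes "L-lipschitz_on U f" "L-lipschitz_on U g"
  shows "L-lipschitz_on U (\<lambda>x. max (f x) (g x))"
proof (rule lipschitz_onI)
  fix x y assume "x \<in> U" "y \<in> U"
  then have "\<bar>f x - f y\<bar> \<le> L * dist x y" "\<bar>g x - g y\<bar> \<le> L * dist x y"
    using assms by (auto simp: dist_real_def dest: lipschitz_onD)
  then show "dist (max (f x) (g x)) (max (f y) (g y)) \<le> L * dist x y"
    by (simp add: dist_real_def max_def abs_le_iff)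
qed (use assms lipschitz_on_nonneg in blast)

lemma lipschitz_on_min [lipschitz_intros]:
  fixes f g :: "'a::metric_space \<Rightarrow> real"
  assumes "L-lipschitz_on U f" "L-lipschitz_on U g"
  shows "L-lipschitz_on U (\<lambda>x. min (f x) (g x))"
proof (rule lipschitz_onI)
  fix x y assume "x \<in> U" "y \<in> U"
  then have "\<bar>f x - f y\<bar> \<le> L * dist x y" "\<bar>g x - g y\<bar> \<le> L * dist x y"
    using assms by (auto simp: dist_real_def dest: lipschitz_onD)
  then show "dist (min (f x) (g x)) (min (f y) (g y)) \<le> L * dist x y"
    by (simp add: dist_real_def min_def abs_le_iff)
qed (use assms lipschitz_on_nonneg in blast)

lemma lipschitz_on_constant_nonneg: "0 \<le> L \<Longrightarrow> L-lipschitz_on U (\<lambda>x. c)"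
  using lipschitz_on_mono[OF lipschitz_on_constant] by blast

lemma lipschitz_on_infdist: "1-lipschitz_on U (\<lambda>x. infdist x T)"
  by (rule lipschitz_onI) (auto simp: dist_real_def infdist_triangle_abs)

lemma lipschitz_on_dist_left: "1-lipschitz_on U (\<lambda>x. dist x a)"
  using lipschitz_on_infdist[of U "{a}"] by simp

lemma infdist_less_imp_ex_dist_less:
  assumes "infdist x T < r" "T \<noteq> {}"
  shows "\<exists>p\<in>T. dist x p < r"
  using assms by (simp add: infdist_notempty cINF_less_iff)

lemma dist_Pair_le_sum: "dist (a, b) (c, d) \<le> dist a c + dist b d"
  by (simp add: dist_Pair_Pair sqrt_sum_squares_le_sum)

lemma Lip0E:
  assumes "f \<in> Lip0 z"
  obtains L where "f z = 0" "L-lipschitz_on UNIV f"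
  using assms by (auto simp: Lip0_def)

lemma Lip0I: "f z = 0 \<Longrightarrow> L-lipschitz_on UNIV f \<Longrightarrow> f \<in> Lip0 z"
  by (auto simp: Lip0_def)

lemma Lip0_zero: "(\<lambda>_. 0) \<in> Lip0 z"
  by (rule Lip0I[OF _ lipschitz_on_constant]) simp

lemma molecule_apply [simp]: "molecule x y f = (f x - f y) / dist x y"
  by (simp add: molecule_def delta_def)

section \<open>Weak closures of sets of molecules\<close>

definition molecules_on :: "('a::metric_space \<times> 'a) set \<Rightarrow> (('a \<Rightarrow> real) \<Rightarrow> real) set" where
  "molecules_on P = {molecule x y | x y. (x, y) \<in> P \<and> x \<noteq> y}"

lemma molecules_eq_molecules_on_UNIV: "molecules = molecules_on UNIV"
  by (simp add: molecules_def molecules_on_def)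

lemma molecules_on_mono: "P \<subseteq> Q \<Longrightarrow> molecules_on P \<subseteq> molecules_on Q"
  by (auto simp: molecules_on_def)

lemma molecules_on_empty [simp]: "molecules_on {} = {}"
  by (simp add: molecules_on_def)

lemma weak_closure_free_space: "\<mu> \<in> weak_closure z A \<Longrightarrow> \<mu> \<in> free_space z"
  by (simp add: weak_closure_def)

lemma weak_closureD:
  assumes "\<mu> \<in> weak_closure z A" "finite F" "F \<subseteq> Lip0 z" "\<epsilon> > 0"
  obtains \<nu> where "\<nu> \<in> A" "\<And>f. f \<in> F \<Longrightarrow> \<bar>\<mu> f - \<nu> f\<bar> < \<epsilon>"
proof -
  have "\<exists>\<nu>\<in>A. \<forall>f\<in>F. \<bar>\<mu> f - \<nu> f\<bar> < \<epsilon>"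
    using assms by (simp add: weak_closure_def)
  then show ?thesis using that by blast
qed

lemma weak_closure_approx:
  assumes "\<mu> \<in> weak_closure z A" "f \<in> Lip0 z" "\<epsilon> > 0"
  shows "\<exists>\<nu>\<in>A. \<bar>\<mu> f - \<nu> f\<bar> < \<epsilon>"
  by (rule weak_closureD[OF assms(1), of "{f}" \<epsilon>]) (use assms(2,3) in auto)

lemma weak_closure_mono:
  assumes "A \<subseteq> B" shows "weak_closure z A \<subseteq> weak_closure z B"
proof
  fix \<mu> assume "\<mu> \<in> weak_closure z A"
  then have "\<mu> \<in> free_space z"
    and "\<forall>F \<epsilon>. finite F \<and> F \<subseteq> Lip0 z \<and> \<epsilon> > 0 \<longrightarrow> (\<exists>\<nu>\<in>A. \<forall>f\<in>F. \<bar>\<mu> f - \<nu> f\<bar> < \<epsilon>)"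
    by (simp_all add: weak_closure_def)
  then show "\<mu> \<in> weak_closure z B"
    using assms by (simp add: weak_closure_def) blast
qed

lemma weak_closure_empty [simp]: "weak_closure z {} = {}"
proof -
  have "\<mu> \<notin> weak_closure z {}" for \<mu>
  proof
    assume "\<mu> \<in> weak_closure z {}"
    then obtain \<nu> where "\<nu> \<in> ({} :: (('a \<Rightarrow> real) \<Rightarrow> real) set)"
      by (rule weak_closureD[where F = "{}" and \<epsilon> = 1]) auto
    then show False by simp
  qed
  then show ?thesis by blast
qed

lemma not_in_weak_closureE:
  assumes "\<mu> \<notin> weak_closure z A" "\<mu> \<in> free_space z"
  obtains F \<epsilon> where "finite F" "F \<subseteq> Lip0 z" "\<epsilon> > 0"
    "\<And>\<nu>. \<nu> \<in> A \<Longrightarrow> \<exists>f\<in>F. \<epsilon> \<le> \<bar>\<mu> f - \<nu> f\<bar>"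
proof -
  have "\<exists>F \<epsilon>. finite F \<and> F \<subseteq> Lip0 z \<and> \<epsilon> > 0 \<and> (\<forall>\<nu>\<in>A. \<exists>f\<in>F. \<epsilon> \<le> \<bar>\<mu> f - \<nu> f\<bar>)"
    using assms by (simp add: weak_closure_def not_less)
  then show ?thesis using that by blast
qed

lemma weak_closure_Un: "weak_closure z (A \<union> B) = weak_closure z A \<union> weak_closure z B"
proof
  show "weak_closure z (A \<union> B) \<subseteq> weak_closure z A \<union> weak_closure z B"
  proof (rule subsetI, rule ccontr)
    fix \<mu> assume \<mu>: "\<mu> \<in> weak_closure z (A \<union> B)"
      and "\<mu> \<notin> weak_closure z A \<union> weak_closure z B"
    moreover have "\<mu> \<in> free_space z" using \<mu> by (rule weak_closure_free_space)
    ultimately obtain F1 \<epsilon>1 F2 \<epsilon>2 where F: "finite F1" "F1 \<subseteq> Lip0 z" "\<epsilon>1 > 0"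
      "finite F2" "F2 \<subseteq> Lip0 z" "\<epsilon>2 > 0"
      and far1: "\<And>\<nu>. \<nu> \<in> A \<Longrightarrow> \<exists>f\<in>F1. \<epsilon>1 \<le> \<bar>\<mu> f - \<nu> f\<bar>"
      and far2: "\<And>\<nu>. \<nu> \<in> B \<Longrightarrow> \<exists>f\<in>F2. \<epsilon>2 \<le> \<bar>\<mu> f - \<nu> f\<bar>"
      by (metis UnCI not_in_weak_closureE)
    obtain \<nu> where \<nu>: "\<nu> \<in> A \<union> B" "\<And>f. f \<in> F1 \<union> F2 \<Longrightarrow> \<bar>\<mu> f - \<nu> f\<bar> < min \<epsilon>1 \<epsilon>2"
      by (rule weak_closureD[OF \<mu>, of "F1 \<union> F2" "min \<epsilon>1 \<epsilon>2"]) (use F in auto)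
    then consider f where "f \<in> F1" "\<epsilon>1 \<le> \<bar>\<mu> f - \<nu> f\<bar>" | f where "f \<in> F2" "\<epsilon>2 \<le> \<bar>\<mu> f - \<nu> f\<bar>"
      using far1 far2 by blast
    then show False
      by cases (use \<nu>(2) in fastforce)+
  qed
qed (use weak_closure_mono in blast)

lemma weak_closure_UN:
  "finite I \<Longrightarrow> weak_closure z (\<Union>i\<in>I. A i) = (\<Union>i\<in>I. weak_closure z (A i))"
  by (induction I rule: finite_induct) (simp_all add: weak_closure_Un)

lemma weak_closure_restrict:
  assumes "\<mu> \<in> weak_closure z A" "finite G" "G \<subseteq> Lip0 z" "\<delta> > 0"
  shows "\<mu> \<in> weak_closure z {\<nu> \<in> A. \<forall>g\<in>G. \<bar>\<mu> g - \<nu> g\<bar> < \<delta>}"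
proof -
  have "\<exists>\<nu>\<in>{\<nu> \<in> A. \<forall>g\<in>G. \<bar>\<mu> g - \<nu> g\<bar> < \<delta>}. \<forall>f\<in>F. \<bar>\<mu> f - \<nu> f\<bar> < \<epsilon>"
    if F: "finite F" "F \<subseteq> Lip0 z" "\<epsilon> > 0" for F \<epsilon>
  proof -
    obtain \<nu> where \<nu>: "\<nu> \<in> A" "\<And>f. f \<in> F \<union> G \<Longrightarrow> \<bar>\<mu> f - \<nu> f\<bar> < min \<epsilon> \<delta>"
      by (rule weak_closureD[OF assms(1), of "F \<union> G" "min \<epsilon> \<delta>"]) (use F assms(2-4) in auto)
    then show ?thesis by (intro bexI[of _ \<nu>]) auto
  qed
  then show ?thesis using weak_closure_free_space[OF assms(1)] by (simp add: weak_closure_def)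
qed

section \<open>Functionals in the free space\<close>

lemma free_spaceE:
  assumes "\<mu> \<in> free_space z" "\<epsilon> > 0"
  obtains S c where "finite S"
    "\<And>f L. f \<in> Lip0 z \<Longrightarrow> L-lipschitz_on UNIV f \<Longrightarrow> \<bar>\<mu> f - (\<Sum>x\<in>S. c x * f x)\<bar> \<le> \<epsilon> * L"
proof -
  have "\<exists>S c. finite S \<and> (\<forall>f\<in>Lip0 z. \<forall>L. L-lipschitz_on UNIV f \<longrightarrow>
      \<bar>\<mu> f - (\<Sum>x\<in>S. c x * delta x f)\<bar> \<le> \<epsilon> * L)"
    using assms unfolding free_space_def by simp
  then show ?thesis using that unfolding delta_def by blast
qed

lemma free_space_zero_fun:
  assumes "\<mu> \<in> free_space z"
  shows "\<mu> (\<lambda>_. 0) = 0"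
proof -
  obtain S c where "finite S"
    "\<And>f L. f \<in> Lip0 z \<Longrightarrow> L-lipschitz_on UNIV f \<Longrightarrow> \<bar>\<mu> f - (\<Sum>x\<in>S. c x * f x)\<bar> \<le> 1 * L"
    using free_spaceE[OF assms zero_less_one] by auto
  then show ?thesis using Lip0_zero lipschitz_on_constant by fastforce
qed

lemma free_space_agree_on_finite_set:
  assumes "\<mu> \<in> free_space z" "\<epsilon> > 0"
  obtains T where "finite T" "z \<in> T"
    "\<And>f g L. f \<in> Lip0 z \<Longrightarrow> g \<in> Lip0 z \<Longrightarrow> L-lipschitz_on UNIV f \<Longrightarrow> L-lipschitz_on UNIV g
      \<Longrightarrow> (\<And>t. t \<in> T \<Longrightarrow> f t = g t) \<Longrightarrow> \<bar>\<mu> f - \<mu> g\<bar> \<le> \<epsilon> * L"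
proof -
  obtain S c where S: "finite S" and approx: "\<And>f L. f \<in> Lip0 z \<Longrightarrow> L-lipschitz_on UNIV f
      \<Longrightarrow> \<bar>\<mu> f - (\<Sum>x\<in>S. c x * f x)\<bar> \<le> \<epsilon> / 2 * L"
    by (rule free_spaceE[OF assms(1), of "\<epsilon> / 2"]) (use assms(2) in auto)
  show ?thesis
  proof (rule that[of "insert z S"])
    fix f g L assume f: "f \<in> Lip0 z" "L-lipschitz_on UNIV f" and g: "g \<in> Lip0 z" "L-lipschitz_on UNIV g"
      and agree: "\<And>t. t \<in> insert z S \<Longrightarrow> f t = g t"
    have "(\<Sum>x\<in>S. c x * f x) = (\<Sum>x\<in>S. c x * g x)" using agree by (intro sum.cong) auto
    moreover have "\<epsilon> / 2 * L + \<epsilon> / 2 * L = \<epsilon> * L" by simp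
    ultimately show "\<bar>\<mu> f - \<mu> g\<bar> \<le> \<epsilon> * L" using approx[OF f] approx[OF g] by linarith
  qed (use S in auto)
qed

lemma free_space_tendsto:
  assumes \<mu>: "\<mu> \<in> free_space z"
    and g: "\<And>n. g n \<in> Lip0 z" "\<And>n. L-lipschitz_on UNIV (g n)"
    and f: "f \<in> Lip0 z" "L-lipschitz_on UNIV f"
    and lim: "\<And>t. (\<lambda>n. g n t) \<longlonglongrightarrow> f t"
  shows "(\<lambda>n. \<mu> (g n)) \<longlonglongrightarrow> \<mu> f"
proof (rule metric_LIMSEQ_I)
  fix e :: real assume e: "e > 0"
  have "L \<ge> 0" using f(2) lipschitz_on_nonneg by blast
  define \<epsilon> where "\<epsilon> = e / (3 * (L + 1))"
  have \<epsilon>: "\<epsilon> > 0" "\<epsilon> * L < e / 3" using e \<open>L \<ge> 0\<close> by (auto simp: \<epsilon>_def field_simps)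
  obtain S c where "finite S" and approx: "\<And>h L. h \<in> Lip0 z \<Longrightarrow> L-lipschitz_on UNIV h
      \<Longrightarrow> \<bar>\<mu> h - (\<Sum>x\<in>S. c x * h x)\<bar> \<le> \<epsilon> * L"
    using free_spaceE[OF \<mu> \<epsilon>(1)] by auto
  have "(\<lambda>n. \<Sum>x\<in>S. c x * g n x) \<longlonglongrightarrow> (\<Sum>x\<in>S. c x * f x)"
    by (intro tendsto_sum tendsto_mult_left lim)
  then obtain N where N: "\<forall>n\<ge>N. \<bar>(\<Sum>x\<in>S. c x * g n x) - (\<Sum>x\<in>S. c x * f x)\<bar> < e / 3"
    using LIMSEQ_D[of _ _ "e / 3"] e by fastforce
  have "\<bar>\<mu> (g n) - \<mu> f\<bar> < e" if "n \<ge> N" for n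
  proof -
    have "\<bar>\<mu> (g n) - (\<Sum>x\<in>S. c x * g n x)\<bar> \<le> \<epsilon> * L" by (rule approx[OF g(1) g(2)])
    moreover have "\<bar>\<mu> f - (\<Sum>x\<in>S. c x * f x)\<bar> \<le> \<epsilon> * L" by (rule approx[OF f])
    moreover have "\<bar>(\<Sum>x\<in>S. c x * g n x) - (\<Sum>x\<in>S. c x * f x)\<bar> < e / 3" using N that by blast
    ultimately show ?thesis using \<epsilon>(2) by linarith
  qed
  then show "\<exists>N. \<forall>n\<ge>N. dist (\<mu> (g n)) (\<mu> f) < e" unfolding dist_real_def by blast
qed

lemma free_space_bounded_witness:
  assumes \<mu>: "\<mu> \<in> free_space z" and f: "f \<in> Lip0 z" "\<mu> f \<noteq> 0"
  obtains g L C where "g \<in> Lip0 z" "L-lipschitz_on UNIV g" "C > 0" "\<And>t. \<bar>g t\<bar> \<le> C" "\<mu> g \<noteq> 0"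
proof -
  obtain L where fz: "f z = 0" and L: "L-lipschitz_on UNIV f" using f(1) by (rule Lip0E)
  define g where "g n t = max (- real n) (min (f t) (real n))" for n t
  have g_lip: "L-lipschitz_on UNIV (g n)" for n
    unfolding g_def using L lipschitz_on_nonneg[OF L]
    by (intro lipschitz_on_max lipschitz_on_min lipschitz_on_constant_nonneg)
  have g_Lip0: "g n \<in> Lip0 z" for n using Lip0I[OF _ g_lip] fz by (simp add: g_def)
  have "(\<lambda>n. g n t) \<longlonglongrightarrow> f t" for t
  proof (rule tendsto_eventually, rule eventually_sequentiallyI)
    fix n assume "n \<ge> nat \<lceil>\<bar>f t\<bar>\<rceil>"
    then have "\<bar>f t\<bar> \<le> real n" by linarith
    then show "g n t = f t" by (simp add: g_def abs_le_iff)
  qed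
  then have lim: "(\<lambda>n. \<mu> (g n)) \<longlonglongrightarrow> \<mu> f" by (rule free_space_tendsto[OF \<mu> g_Lip0 g_lip f(1) L])
  have "\<exists>n. \<mu> (g n) \<noteq> 0"
  proof (rule ccontr)
    assume "\<nexists>n. \<mu> (g n) \<noteq> 0"
    then have "(\<lambda>n. \<mu> (g n)) \<longlonglongrightarrow> 0" by simp
    then show False using lim f(2) LIMSEQ_unique by blast
  qed
  then obtain n where "\<mu> (g n) \<noteq> 0" ..
  moreover have "\<bar>g n t\<bar> \<le> real n + 1" for t by (simp add: g_def abs_le_iff max_def min_def)
  ultimately show ?thesis by (intro that[OF g_Lip0 g_lip, of "real n + 1"]) auto
qed

(* The values of f on the closed \<rho>-ball around a are replaced by f a; clipping f to the band
   f a \<plusminus> L (d(t, a) - \<rho>)\<^sup>+ keeps the Lipschitz constant L. *)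
definition flatten_at :: "('a::metric_space \<Rightarrow> real) \<Rightarrow> real \<Rightarrow> 'a \<Rightarrow> real \<Rightarrow> 'a \<Rightarrow> real" where
  "flatten_at f L a \<rho> t =
     (let \<phi> = L * max 0 (dist t a - \<rho>) in max (f a - \<phi>) (min (f t) (f a + \<phi>)))"

lemma lipschitz_on_flatten_at:
  assumes "L-lipschitz_on UNIV f"
  shows "L-lipschitz_on UNIV (flatten_at f L a \<rho>)"
proof -
  have "L \<ge> 0" using assms lipschitz_on_nonneg by blast
  have "1-lipschitz_on UNIV (\<lambda>t. dist t a - \<rho>)"
    using lipschitz_on_diff[OF lipschitz_on_dist_left lipschitz_on_constant] by simp
  then have "1-lipschitz_on UNIV (\<lambda>t. max 0 (dist t a - \<rho>))"
    by (intro lipschitz_on_max lipschitz_on_constant_nonneg) simp_all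
  from lipschitz_on_cmult_real_nonneg[OF this \<open>L \<ge> 0\<close>]
  have \<phi>: "L-lipschitz_on UNIV (\<lambda>t. L * max 0 (dist t a - \<rho>))" by simp
  have "L-lipschitz_on UNIV (\<lambda>t. f a - L * max 0 (dist t a - \<rho>))"
    using lipschitz_on_diff[OF lipschitz_on_constant \<phi>] by simp
  moreover have "L-lipschitz_on UNIV (\<lambda>t. f a + L * max 0 (dist t a - \<rho>))"
    using lipschitz_on_add[OF lipschitz_on_constant \<phi>] by simp
  ultimately show ?thesis
    unfolding flatten_at_def Let_def by (intro lipschitz_on_max lipschitz_on_min assms)
qed

lemma flatten_at_eq_near:
  "dist t a \<le> \<rho> \<Longrightarrow> flatten_at f L a \<rho> t = f a"
  by (simp add: flatten_at_def)

lemma tendsto_flatten_at: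
  assumes "L-lipschitz_on UNIV f" "\<rho> \<longlonglongrightarrow> 0"
  shows "(\<lambda>n. flatten_at f L a (\<rho> n) t) \<longlonglongrightarrow> f t"
proof -
  have "(\<lambda>n. flatten_at f L a (\<rho> n) t) \<longlonglongrightarrow> flatten_at f L a 0 t"
    unfolding flatten_at_def Let_def by (intro tendsto_intros assms(2))
  moreover have "\<bar>f t - f a\<bar> \<le> L * dist t a"
    using lipschitz_onD[OF assms(1)] by (simp add: dist_real_def)
  then have "flatten_at f L a 0 t = f t"
    by (simp add: flatten_at_def abs_le_iff max_def min_def)
  ultimately show ?thesis by simp
qed

lemma Lip0_approx_locally_constant:
  assumes f: "f \<in> Lip0 z" "L-lipschitz_on UNIV f"
  obtains g where "\<And>n. g n \<in> Lip0 z" "\<And>n. L-lipschitz_on UNIV (g n)"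
    "\<And>n. \<exists>\<rho>>0. \<forall>t. dist t a < \<rho> \<longrightarrow> g n t = g n a"
    "\<And>t. (\<lambda>n. g n t) \<longlonglongrightarrow> f t"
proof
  define \<rho> :: "nat \<Rightarrow> real" where "\<rho> n = inverse (real (Suc n))" for n
  have \<rho>: "\<rho> \<longlonglongrightarrow> 0" unfolding \<rho>_def by (rule LIMSEQ_inverse_real_of_nat)
  let ?g = "\<lambda>n t. flatten_at f L a (\<rho> n) t - flatten_at f L a (\<rho> n) z"
  show "L-lipschitz_on UNIV (?g n)" for n
    using lipschitz_on_diff[OF lipschitz_on_flatten_at[OF f(2)] lipschitz_on_constant] by simp
  then show "?g n \<in> Lip0 z" for n by (rule Lip0I[rotated]) simp
  show "\<exists>\<rho>>0. \<forall>t. dist t a < \<rho> \<longrightarrow> ?g n t = ?g n a" for n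
    by (rule exI[of _ "\<rho> n"]) (simp add: \<rho>_def flatten_at_eq_near)
  have "f z = 0" using f(1) by (rule Lip0E)
  then show "(\<lambda>n. ?g n t) \<longlonglongrightarrow> f t" for t
    using tendsto_diff[OF tendsto_flatten_at[OF f(2) \<rho>, of a t] tendsto_flatten_at[OF f(2) \<rho>, of a z]]
    by simp
qed

lemma free_space_eq_zero_if_annihilates_locally_constant:
  assumes \<mu>: "\<mu> \<in> free_space z"
    and annihilates: "\<And>g \<rho>. g \<in> Lip0 z \<Longrightarrow> \<rho> > 0 \<Longrightarrow> (\<And>t. dist t a < \<rho> \<Longrightarrow> g t = g a) \<Longrightarrow> \<mu> g = 0"
    and f: "f \<in> Lip0 z"
  shows "\<mu> f = 0"
proof -
  obtain L where L: "L-lipschitz_on UNIV f" using f by (rule Lip0E)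
  show ?thesis
  proof (rule Lip0_approx_locally_constant[OF f L])
    fix g assume g: "\<And>n. g n \<in> Lip0 z" "\<And>n. L-lipschitz_on UNIV (g n)"
      and const: "\<And>n. \<exists>\<rho>>0. \<forall>t. dist t a < \<rho> \<longrightarrow> g n t = g n a"
      and lim: "\<And>t. (\<lambda>n. g n t) \<longlonglongrightarrow> f t"
    have "\<mu> (g n) = 0" for n using const[of n] annihilates[OF g(1)] by blast
    then have "(\<lambda>n. \<mu> (g n)) \<longlonglongrightarrow> 0" by simp
    moreover have "(\<lambda>n. \<mu> (g n)) \<longlonglongrightarrow> \<mu> f" by (rule free_space_tendsto[OF \<mu> g f L lim])
    ultimately show ?thesis using LIMSEQ_unique by blast
  qed
qed

section \<open>Localising the pairs of approximating molecules\<close>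

definition capped_infdist :: "'a::metric_space set \<Rightarrow> real \<Rightarrow> 'a \<Rightarrow> real" where
  "capped_infdist T r t = min (infdist t T) r"

lemma lipschitz_on_capped_infdist: "0 \<le> r \<Longrightarrow> 1-lipschitz_on U (capped_infdist T r)"
  unfolding capped_infdist_def by (intro lipschitz_on_min lipschitz_on_infdist lipschitz_on_constant_nonneg) simp

lemma capped_infdist_eq_0: "t \<in> T \<Longrightarrow> 0 \<le> r \<Longrightarrow> capped_infdist T r t = 0"
  by (simp add: capped_infdist_def)

lemma Lip0_capped_infdist: "z \<in> T \<Longrightarrow> 0 \<le> r \<Longrightarrow> capped_infdist T r \<in> Lip0 z"
  by (rule Lip0I[OF capped_infdist_eq_0 lipschitz_on_capped_infdist])

lemma Lip0_cutoff_near_set: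
  fixes g :: "'a::metric_space \<Rightarrow> real"
  assumes g: "g \<in> Lip0 z" "L-lipschitz_on UNIV g" "\<And>t. \<bar>g t\<bar> \<le> C" and K: "L \<le> K" "C \<le> K * s"
  obtains f where "f \<in> Lip0 z" "K-lipschitz_on UNIV f" "\<And>t. t \<in> T \<Longrightarrow> f t = g t"
    "\<And>t. s \<le> infdist t T \<Longrightarrow> f t = 0" "\<And>t. \<bar>f t\<bar> \<le> C"
proof -
  have "0 \<le> K" using g(2) K(1) lipschitz_on_nonneg by fastforce
  define \<phi> where "\<phi> t = K * max 0 (s - infdist t T)" for t
  have \<phi>_nonneg: "0 \<le> \<phi> t" for t using \<open>0 \<le> K\<close> by (simp add: \<phi>_def)
  have "1-lipschitz_on UNIV (\<lambda>t. s - infdist t T)"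
    using lipschitz_on_diff[OF lipschitz_on_constant lipschitz_on_infdist] by simp
  then have "1-lipschitz_on UNIV (\<lambda>t. max 0 (s - infdist t T))"
    by (intro lipschitz_on_max lipschitz_on_constant_nonneg) simp_all
  from lipschitz_on_cmult_real_nonneg[OF this \<open>0 \<le> K\<close>]
  have \<phi>_lip: "K-lipschitz_on UNIV \<phi>" by (simp add: \<phi>_def)
  let ?f = "\<lambda>t. max (- \<phi> t) (min (g t) (\<phi> t))"
  show ?thesis
  proof (rule that[of ?f])
    have "K-lipschitz_on UNIV g" using lipschitz_on_mono[OF g(2) _ K(1)] by simp
    then show "K-lipschitz_on UNIV ?f" using \<phi>_lip by (intro lipschitz_on_max lipschitz_on_min) simp_all
    moreover have "g z = 0" using g(1) by (rule Lip0E)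
    ultimately show "?f \<in> Lip0 z" using \<phi>_nonneg[of z] by (intro Lip0I) simp_all
    show "?f t = g t" if "t \<in> T" for t
    proof -
      have "K * s \<le> K * max 0 s" using \<open>0 \<le> K\<close> by (simp add: mult_left_mono)
      then have "\<bar>g t\<bar> \<le> \<phi> t" using that g(3)[of t] K(2) by (simp add: \<phi>_def)
      then show ?thesis by (simp add: abs_le_iff)
    qed
    show "?f t = 0" if "s \<le> infdist t T" for t using that by (simp add: \<phi>_def)
    show "\<bar>?f t\<bar> \<le> C" for t using g(3)[of t] \<phi>_nonneg[of t] by (simp add: abs_le_iff max_def min_def)
  qed
qed

(* A slope of f above \<beta> forces d(x, y) < 2C/\<beta> and keeps x, y from both lying s-far from T;
   the small slope of the capped distance then puts both within 2s of T. *)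
lemma molecule_detects_near_pair:
  fixes f :: "'a::metric_space \<Rightarrow> real"
  assumes f_far: "\<And>t. s \<le> infdist t T \<Longrightarrow> f t = 0" and f_bound: "\<And>t. \<bar>f t\<bar> \<le> C"
    and "x \<noteq> y" "\<beta> > 0" and large: "\<beta> < \<bar>molecule x y f\<bar>"
    and small: "\<bar>molecule x y (capped_infdist T (2 * s))\<bar> < \<beta> * s / (2 * C)"
  shows "infdist x T < 2 * s \<and> infdist y T < 2 * s"
proof -
  let ?k = "capped_infdist T (2 * s)"
  define d where "d = dist x y"
  have "d > 0" using \<open>x \<noteq> y\<close> by (simp add: d_def)
  have "\<beta> * d < \<bar>f x - f y\<bar>"
    using large \<open>d > 0\<close> by (simp add: d_def abs_divide pos_less_divide_eq)
  moreover have "\<bar>f x - f y\<bar> \<le> 2 * C" using f_bound[of x] f_bound[of y] by linarith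
  ultimately have \<beta>d: "\<beta> * d < 2 * C" by linarith
  then have "C > 0" using \<open>\<beta> > 0\<close> \<open>d > 0\<close> by (smt (verit) mult_pos_pos)
  have "0 < \<beta> * s / (2 * C)" using small by (meson abs_ge_zero le_less_trans)
  then have "s > 0" using \<open>\<beta> > 0\<close> \<open>C > 0\<close> by (simp add: zero_less_divide_iff zero_less_mult_iff)
  have "\<bar>?k x - ?k y\<bar> < \<beta> * s / (2 * C) * d"
    using small \<open>d > 0\<close> by (simp add: d_def abs_divide divide_less_eq)
  also have "\<dots> = (\<beta> * d) * s / (2 * C)" by simp
  also have "\<dots> \<le> (2 * C) * s / (2 * C)"
    using \<beta>d \<open>s > 0\<close> \<open>C > 0\<close> by (intro divide_right_mono mult_right_mono) simp_all
  also have "\<dots> = s" using \<open>C > 0\<close> by simp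
  finally have k_close: "\<bar>?k x - ?k y\<bar> < s" .
  have not_both_far: "\<not> (s \<le> infdist x T \<and> s \<le> infdist y T)"
    using large f_far \<open>\<beta> > 0\<close> by auto
  show ?thesis
  proof (rule ccontr)
    assume "\<not> ?thesis"
    then show False
      using not_both_far k_close by (auto simp: capped_infdist_def min_def split: if_splits)
  qed
qed

lemma free_space_localizing_functions:
  assumes \<mu>: "\<mu> \<in> free_space z"
    and g: "g \<in> Lip0 z" "L-lipschitz_on UNIV g" "C > 0" "\<And>t. \<bar>g t\<bar> \<le> C"
    and \<beta>: "\<beta> > 0" "4 * \<beta> \<le> \<bar>\<mu> g\<bar>" and "s > 0"
  obtains T f where "finite T" "z \<in> T" "f \<in> Lip0 z"
    "\<And>t. s \<le> infdist t T \<Longrightarrow> f t = 0" "\<And>t. \<bar>f t\<bar> \<le> C" "2 * \<beta> \<le> \<bar>\<mu> f\<bar>"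
    "\<bar>\<mu> (capped_infdist T (2 * s))\<bar> \<le> \<beta> * s / (4 * C)"
proof -
  define K where "K = max L (C / s)"
  have K_ge: "L \<le> K" "C / s \<le> K" by (simp_all add: K_def)
  have K: "L \<le> K" "C \<le> K * s" "K > 0"
  proof -
    show "L \<le> K" by (rule K_ge(1))
    show "C \<le> K * s" using K_ge(2) \<open>s > 0\<close> by (simp add: pos_divide_le_eq)
    have "0 < C / s" using \<open>s > 0\<close> \<open>C > 0\<close> by simp
    then show "K > 0" using K_ge(2) by linarith
  qed
  define \<epsilon> where "\<epsilon> = min (2 * \<beta> / K) (\<beta> * s / (4 * C))"
  have \<epsilon>: "\<epsilon> > 0" "\<epsilon> * K \<le> 2 * \<beta>" "\<epsilon> \<le> \<beta> * s / (4 * C)"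
    using K(3) g(3) \<beta>(1) \<open>s > 0\<close> by (auto simp: \<epsilon>_def min_def field_simps)
  show ?thesis
  proof (rule free_space_agree_on_finite_set[OF \<mu> \<epsilon>(1)])
    fix T assume T: "finite T" "z \<in> T"
      and agree: "\<And>f h L'. f \<in> Lip0 z \<Longrightarrow> h \<in> Lip0 z \<Longrightarrow> L'-lipschitz_on UNIV f \<Longrightarrow>
        L'-lipschitz_on UNIV h \<Longrightarrow> (\<And>t. t \<in> T \<Longrightarrow> f t = h t) \<Longrightarrow> \<bar>\<mu> f - \<mu> h\<bar> \<le> \<epsilon> * L'"
    have "\<bar>\<mu> (capped_infdist T (2 * s)) - \<mu> (\<lambda>_. 0)\<bar> \<le> \<epsilon> * 1"
      using \<open>s > 0\<close> T(2) by (intro agree Lip0_capped_infdist Lip0_zero lipschitz_on_capped_infdist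
          lipschitz_on_constant_nonneg) (simp_all add: capped_infdist_eq_0)
    then have small: "\<bar>\<mu> (capped_infdist T (2 * s))\<bar> \<le> \<beta> * s / (4 * C)"
      using \<epsilon>(3) free_space_zero_fun[OF \<mu>] by simp
    show ?thesis
    proof (rule Lip0_cutoff_near_set[where T = T, OF g(1,2,4) K(1,2)])
      fix f assume f: "f \<in> Lip0 z" "K-lipschitz_on UNIV f" "\<And>t. t \<in> T \<Longrightarrow> f t = g t"
        "\<And>t. s \<le> infdist t T \<Longrightarrow> f t = 0" "\<And>t. \<bar>f t\<bar> \<le> C"
      have "K-lipschitz_on UNIV g" using lipschitz_on_mono[OF g(2) _ K(1)] by simp
      then have "\<bar>\<mu> f - \<mu> g\<bar> \<le> \<epsilon> * K" by (rule agree[OF f(1) g(1) f(2)]) (rule f(3))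
      then have large: "2 * \<beta> \<le> \<bar>\<mu> f\<bar>" using \<epsilon>(2) \<beta>(2) by linarith
      show ?thesis by (rule that[OF T f(1) f(4) f(5) large small])
    qed
  qed
qed

lemma molecules_on_subset_UN_balls:
  assumes "T \<noteq> {}"
    and near: "\<And>x y. (x, y) \<in> P \<Longrightarrow> x \<noteq> y \<Longrightarrow> infdist x T < r / 2 \<and> infdist y T < r / 2"
  shows "molecules_on P \<subseteq> (\<Union>c\<in>T \<times> T. molecules_on (P \<inter> ball c r))"
proof
  fix \<nu> assume "\<nu> \<in> molecules_on P"
  then obtain x y where \<nu>: "\<nu> = molecule x y" "(x, y) \<in> P" "x \<noteq> y"
    by (auto simp: molecules_on_def)
  obtain p q where pq: "p \<in> T" "q \<in> T" "dist x p < r / 2" "dist y q < r / 2"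
    using near[OF \<nu>(2,3)] infdist_less_imp_ex_dist_less assms(1) by blast
  then have "(x, y) \<in> ball (p, q) r"
    using dist_Pair_le_sum[of x y p q] by (simp add: dist_commute)
  then have "\<nu> \<in> molecules_on (P \<inter> ball (p, q) r)" using \<nu> by (auto simp: molecules_on_def)
  then show "\<nu> \<in> (\<Union>c\<in>T \<times> T. molecules_on (P \<inter> ball c r))" using pq by blast
qed

lemma weak_closure_molecules_localize:
  fixes z :: "'a::metric_space"
  assumes \<mu>: "\<mu> \<in> weak_closure z (molecules_on A)" and "r > 0"
    and g: "g \<in> Lip0 z" "L-lipschitz_on UNIV g" "C > 0" "\<And>t. \<bar>g t\<bar> \<le> C" "\<mu> g \<noteq> 0"
  shows "\<exists>c. \<mu> \<in> weak_closure z (molecules_on (A \<inter> ball c r))"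
proof -
  define s where "s = r / 4"
  define \<beta> where "\<beta> = \<bar>\<mu> g\<bar> / 4"
  define \<delta> where "\<delta> = min \<beta> (\<beta> * s / (4 * C))"
  have "s > 0" "\<beta> > 0" using \<open>r > 0\<close> g(5) by (simp_all add: s_def \<beta>_def)
  then have "\<delta> > 0" using g(3) by (simp add: \<delta>_def)
  have \<beta>_le: "4 * \<beta> \<le> \<bar>\<mu> g\<bar>" by (simp add: \<beta>_def)
  show ?thesis
  proof (rule free_space_localizing_functions[OF weak_closure_free_space[OF \<mu>] g(1-4) \<open>\<beta> > 0\<close> \<beta>_le \<open>s > 0\<close>])
    fix T f assume T: "finite T" "z \<in> T" and f: "f \<in> Lip0 z"
      "\<And>t. s \<le> infdist t T \<Longrightarrow> f t = 0" "\<And>t. \<bar>f t\<bar> \<le> C" "2 * \<beta> \<le> \<bar>\<mu> f\<bar>"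
      and k: "\<bar>\<mu> (capped_infdist T (2 * s))\<bar> \<le> \<beta> * s / (4 * C)"
    let ?k = "capped_infdist T (2 * s)"
    define P where "P = {(x, y) \<in> A. \<forall>h\<in>{f, ?k}. \<bar>\<mu> h - molecule x y h\<bar> < \<delta>}"
    have near: "infdist x T < r / 2 \<and> infdist y T < r / 2" if "(x, y) \<in> P" "x \<noteq> y" for x y
    proof -
      have close: "\<bar>\<mu> f - molecule x y f\<bar> < \<delta>" "\<bar>\<mu> ?k - molecule x y ?k\<bar> < \<delta>"
        using that(1) by (simp_all add: P_def del: molecule_apply)
      have "\<delta> \<le> \<beta>" "\<delta> \<le> \<beta> * s / (4 * C)" by (simp_all add: \<delta>_def)
      moreover have "\<beta> * s / (2 * C) = 2 * (\<beta> * s / (4 * C))" by simp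
      ultimately have slopes: "\<beta> < \<bar>molecule x y f\<bar>" "\<bar>molecule x y ?k\<bar> < \<beta> * s / (2 * C)"
        using close f(4) k by linarith+
      have "infdist x T < 2 * s \<and> infdist y T < 2 * s"
        by (rule molecule_detects_near_pair[OF f(2,3) that(2) \<open>\<beta> > 0\<close> slopes])
      then show ?thesis by (simp add: s_def)
    qed
    have "{\<nu> \<in> molecules_on A. \<forall>h\<in>{f, ?k}. \<bar>\<mu> h - \<nu> h\<bar> < \<delta>} = molecules_on P"
      by (auto simp: molecules_on_def P_def simp del: molecule_apply)
    moreover have "\<mu> \<in> weak_closure z {\<nu> \<in> molecules_on A. \<forall>h\<in>{f, ?k}. \<bar>\<mu> h - \<nu> h\<bar> < \<delta>}"
      using Lip0_capped_infdist[OF T(2)] \<open>s > 0\<close> \<open>\<delta> > 0\<close> f(1)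
      by (intro weak_closure_restrict[OF \<mu>]) auto
    ultimately have "\<mu> \<in> weak_closure z (molecules_on P)" by simp
    also have "\<dots> \<subseteq> weak_closure z (\<Union>c\<in>T \<times> T. molecules_on (P \<inter> ball c r))"
      using T(2) by (intro weak_closure_mono molecules_on_subset_UN_balls near) auto
    also have "\<dots> = (\<Union>c\<in>T \<times> T. weak_closure z (molecules_on (P \<inter> ball c r)))"
      using T(1) by (simp add: weak_closure_UN)
    finally obtain c where "\<mu> \<in> weak_closure z (molecules_on (P \<inter> ball c r))" by blast
    moreover have "P \<inter> ball c r \<subseteq> A \<inter> ball c r" by (auto simp: P_def)
    ultimately show ?thesis using weak_closure_mono[OF molecules_on_mono] by blast
  qed
qed

section \<open>The cluster pair\<close>

lemma nested_balls_limit_point: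
  fixes N :: "nat \<Rightarrow> 'b::complete_space set"
  assumes nonempty: "\<And>n. N n \<noteq> {}"
    and nested: "\<And>n. N (Suc n) \<subseteq> N n \<inter> ball (c n) (\<rho> n)"
    and \<rho>: "\<rho> \<longlonglongrightarrow> 0"
  obtains a where "\<And>r. r > 0 \<Longrightarrow> \<exists>n. N n \<subseteq> ball a r"
proof -
  have "decseq N" using nested by (intro decseq_SucI) blast
  have N_cball: "closure (N (Suc n)) \<subseteq> cball (c n) (\<rho> n)" for n
    using nested[of n] by (intro closure_minimal) auto
  have \<rho>_small: "\<exists>n. \<rho> n < \<epsilon>" if "\<epsilon> > 0" for \<epsilon>
  proof -
    obtain n where "norm (\<rho> n - 0) < \<epsilon>" using LIMSEQ_D[OF \<rho> \<open>\<epsilon> > 0\<close>] by blast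
    then show ?thesis by (auto simp: abs_less_iff)
  qed
  have "\<exists>n. \<forall>x\<in>closure (N (Suc n)). \<forall>y\<in>closure (N (Suc n)). dist x y < \<epsilon>" if "\<epsilon> > 0" for \<epsilon>
  proof -
    obtain n where "\<rho> n < \<epsilon> / 2" using \<rho>_small \<open>\<epsilon> > 0\<close> by (meson half_gt_zero)
    moreover have "dist x y \<le> 2 * \<rho> n" if "x \<in> closure (N (Suc n))" "y \<in> closure (N (Suc n))" for x y
    proof -
      have "dist (c n) x \<le> \<rho> n" "dist (c n) y \<le> \<rho> n" using N_cball[of n] that by auto
      then show ?thesis using dist_triangle3[of x y "c n"] by linarith
    qed
    ultimately show ?thesis by force
  qed
  moreover have "closure (N (Suc n)) \<subseteq> closure (N (Suc m))" if "m \<le> n" for m n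
    using decseqD[OF \<open>decseq N\<close>, of "Suc m" "Suc n"] that by (simp add: closure_mono)
  ultimately obtain a where a: "\<And>n. a \<in> closure (N (Suc n))"
    using decreasing_closed_nest[of "\<lambda>n. closure (N (Suc n))"] nonempty by (metis closed_closure closure_eq_empty)
  show ?thesis
  proof (rule that)
    fix r :: real assume "r > 0"
    then obtain n where "\<rho> n < r / 2" using \<rho>_small by (meson half_gt_zero)
    moreover have "dist a x < 2 * \<rho> n" if "x \<in> N (Suc n)" for x
    proof -
      have "dist (c n) a \<le> \<rho> n" using a[of n] N_cball[of n] by auto
      moreover have "dist (c n) x < \<rho> n" using nested[of n] that by auto
      ultimately show ?thesis using dist_triangle3[of a x "c n"] by linarith
    qed
    ultimately have "N (Suc n) \<subseteq> ball a r" by fastforce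
    then show "\<exists>n. N n \<subseteq> ball a r" by blast
  qed
qed

lemma complete_space_cluster_point:
  fixes P :: "'b::complete_space set \<Rightarrow> bool"
  assumes "P S"
    and mono: "\<And>A B. P A \<Longrightarrow> A \<subseteq> B \<Longrightarrow> P B"
    and nonempty: "\<And>A. P A \<Longrightarrow> A \<noteq> {}"
    and localize: "\<And>A r. P A \<Longrightarrow> r > 0 \<Longrightarrow> \<exists>c. P (A \<inter> ball c r)"
  obtains a where "\<And>r. r > 0 \<Longrightarrow> P (ball a r)"
proof -
  obtain c where c: "\<And>A r. P A \<Longrightarrow> r > 0 \<Longrightarrow> P (A \<inter> ball (c A r) r)"
    using localize by metis
  define \<rho> :: "nat \<Rightarrow> real" where "\<rho> n = inverse (real (Suc n))" for n
  define N where "N = rec_nat S (\<lambda>n A. A \<inter> ball (c A (\<rho> n)) (\<rho> n))"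
  have N_Suc: "N (Suc n) = N n \<inter> ball (c (N n) (\<rho> n)) (\<rho> n)" for n by (simp add: N_def)
  have P_N: "P (N n)" for n
    by (induction n) (simp_all add: N_def \<open>P S\<close> c \<rho>_def flip: N_Suc)
  have "\<rho> \<longlonglongrightarrow> 0" unfolding \<rho>_def by (rule LIMSEQ_inverse_real_of_nat)
  then obtain a where a: "\<And>r. r > 0 \<Longrightarrow> \<exists>n. N n \<subseteq> ball a r"
    using nested_balls_limit_point[of N "\<lambda>n. c (N n) (\<rho> n)" \<rho>] nonempty[OF P_N] N_Suc by blast
  show ?thesis
  proof (rule that)
    fix r :: real assume "r > 0"
    then obtain n where "N n \<subseteq> ball a r" using a by blast
    then show "P (ball a r)" using mono[OF P_N] by blast
  qed
qed

lemma weak_closure_molecules_at_diagonal: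
  assumes \<mu>: "\<And>r. r > 0 \<Longrightarrow> \<mu> \<in> weak_closure z (molecules_on (ball (a, a) r))"
    and f: "f \<in> Lip0 z"
  shows "\<mu> f = 0"
proof (rule free_space_eq_zero_if_annihilates_locally_constant[OF _ _ f])
  show "\<mu> \<in> free_space z" using \<mu>[of 1] by (simp add: weak_closure_free_space)
  fix g \<rho> assume g: "g \<in> Lip0 z" "\<rho> > 0" and const: "\<And>t. dist t a < \<rho> \<Longrightarrow> g t = g a"
  show "\<mu> g = 0"
  proof (rule ccontr)
    assume "\<mu> g \<noteq> 0"
    then obtain \<nu> where "\<nu> \<in> molecules_on (ball (a, a) \<rho>)" and close: "\<bar>\<mu> g - \<nu> g\<bar> < \<bar>\<mu> g\<bar>"
      using weak_closure_approx[OF \<mu>[OF g(2)] g(1), of "\<bar>\<mu> g\<bar>"] by auto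
    then obtain x y where "\<nu> = molecule x y" "dist (x, y) (a, a) < \<rho>"
      by (auto simp: molecules_on_def dist_commute)
    then have "\<nu> g = 0"
      using dist_fst_le[of "(x, y)" "(a, a)"] dist_snd_le[of "(x, y)" "(a, a)"] const by simp
    then show False using close by simp
  qed
qed

lemma weak_closure_molecules_off_diagonal:
  assumes \<mu>: "\<And>r. r > 0 \<Longrightarrow> \<mu> \<in> weak_closure z (molecules_on (ball (a, b) r))"
    and "a \<noteq> b" and f: "f \<in> Lip0 z"
  shows "\<mu> f = molecule a b f"
proof (rule ccontr)
  assume ne: "\<mu> f \<noteq> molecule a b f"
  define e where "e = \<bar>\<mu> f - molecule a b f\<bar> / 2"
  have "e > 0" using ne by (simp add: e_def)
  obtain L where "L-lipschitz_on UNIV f" using f by (rule Lip0E)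
  then have "continuous_on UNIV f" by (rule lipschitz_on_continuous_on)
  then have "isCont f x" for x by (simp add: continuous_on_eq_continuous_at)
  then have "isCont (\<lambda>p. (f (fst p) - f (snd p)) / dist (fst p) (snd p)) (a, b)"
    using \<open>a \<noteq> b\<close> by (intro isCont_divide isCont_diff isCont_o2[OF isCont_fst] isCont_o2[OF isCont_snd]
        continuous_intros) simp_all
  then have "isCont (\<lambda>p. molecule (fst p) (snd p) f) (a, b)" by simp
  then obtain d where "d > 0"
    and d: "\<And>p. dist p (a, b) < d \<Longrightarrow> \<bar>molecule (fst p) (snd p) f - molecule a b f\<bar> < e"
    using \<open>e > 0\<close> unfolding continuous_at_eps_delta dist_real_def by fastforce
  obtain \<nu> where "\<nu> \<in> molecules_on (ball (a, b) d)" and close: "\<bar>\<mu> f - \<nu> f\<bar> < e"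
    using weak_closure_approx[OF \<mu>[OF \<open>d > 0\<close>] f \<open>e > 0\<close>] by auto
  then obtain x y where "\<nu> = molecule x y" "dist (x, y) (a, b) < d"
    by (auto simp: molecules_on_def dist_commute)
  then have "\<bar>\<nu> f - molecule a b f\<bar> < e" using d[of "(x, y)"] by simp
  moreover have "\<bar>\<mu> f - molecule a b f\<bar> \<le> \<bar>\<mu> f - \<nu> f\<bar> + \<bar>\<nu> f - molecule a b f\<bar>"
    using abs_triangle_ineq[of "\<mu> f - \<nu> f" "\<nu> f - molecule a b f"] by simp
  ultimately show False using close unfolding e_def by (smt (verit) field_sum_of_halves)
qed

lemma weak_closure_molecules_cluster_pair:
  fixes z :: "'a::complete_space"
  assumes \<mu>: "\<mu> \<in> weak_closure z molecules" and f: "f \<in> Lip0 z" "\<mu> f \<noteq> 0"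
  obtains c where "\<And>r. r > 0 \<Longrightarrow> \<mu> \<in> weak_closure z (molecules_on (ball c r))"
proof (rule free_space_bounded_witness[OF weak_closure_free_space[OF \<mu>] f])
  fix g L C assume g: "g \<in> Lip0 z" "L-lipschitz_on UNIV g" "C > 0" "\<And>t. \<bar>g t\<bar> \<le> C" "\<mu> g \<noteq> 0"
  show ?thesis
  proof (rule complete_space_cluster_point[where P = "\<lambda>B. \<mu> \<in> weak_closure z (molecules_on B)" and S = UNIV])
    show "\<mu> \<in> weak_closure z (molecules_on UNIV)" using \<mu> by (simp add: molecules_eq_molecules_on_UNIV)
    show "\<mu> \<in> weak_closure z (molecules_on B)" if "\<mu> \<in> weak_closure z (molecules_on A)" "A \<subseteq> B" for A B
      using that weak_closure_mono[OF molecules_on_mono] by blast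
    show "A \<noteq> {}" if "\<mu> \<in> weak_closure z (molecules_on A)" for A
      using that by auto
    show "\<exists>c. \<mu> \<in> weak_closure z (molecules_on (A \<inter> ball c r))"
      if "\<mu> \<in> weak_closure z (molecules_on A)" "r > 0" for A r
      by (rule weak_closure_molecules_localize[OF that g])
  qed (rule that)
qed

theorem proposition2p13:
  fixes z :: "'a::complete_space"
  assumes "\<mu> \<in> weak_closure z (molecules :: (('a \<Rightarrow> real) \<Rightarrow> real) set)"
  shows "(\<forall>f\<in>Lip0 z. \<mu> f = 0) \<or>
         (\<exists>x y. x \<noteq> y \<and> (\<forall>f\<in>Lip0 z. \<mu> f = molecule x y f))"
proof (cases "\<forall>f\<in>Lip0 z. \<mu> f = 0")
  case False
  then obtain f where "f \<in> Lip0 z" "\<mu> f \<noteq> 0" by blast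
  then obtain a b where ab: "\<And>r. r > 0 \<Longrightarrow> \<mu> \<in> weak_closure z (molecules_on (ball (a, b) r))"
    using weak_closure_molecules_cluster_pair[OF assms] by (metis surj_pair)
  show ?thesis
  proof (cases "a = b")
    case True
    then show ?thesis using weak_closure_molecules_at_diagonal ab by blast
  next
    case False
    then show ?thesis using weak_closure_molecules_off_diagonal[OF ab False] by blast
  qed
qed simp

end
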